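(* Let $m \geq 4$ and let $\Delta_m$ be the two-edge-coloured graph defined in the context. Then: (1) There exists a transversal graph $T$ of $\Delta_m$ such that no transversal graph of $\Delta_m$ is isomorphic, as an edge-coloured graph, to the edge-colour complement of $T$. (2) There is no permutation $\pi$ of the set of $4^m$ positive signed basis matrices that sends every amicable pair of basis matrices with disjoint support to an anti-amicable pair with disjoint support and every anti-amicable pair with disjoint support to an amicable pair with disjoint support; and the set of transversal graphs of $\Delta_m$ that are not isomorphic (as edge-coloured graphs) to their own edge-colour complement cannot be partitioned into pairs in which each member is isomorphic to the edge-colour complement of the other. (3) Among all $m' \geq 1$, the values for which there exists an automorphism of $\Delta_{m'}$ that swaps the red subgraph $\Delta_{m'}[-1]$ and the blue subgraph $\Delta_{m'}[1]$ are exactly $m' = 1, 2, 3$.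
   Context: Let $E_1 = \begin{pmatrix} 0 & -1 \\ 1 & 0\end{pmatrix}$ and $E_2 = \begin{pmatrix} 0 & 1 \\ 1 & 0 \end{pmatrix}$. The positive signed basis of the real monomial representation of the Clifford algebra $\mathbb{R}_{m,m}$ is the set of $4^m$ real monomial $2^m\times 2^m$ matrices $M_1\otimes M_2\otimes\cdots\otimes M_m$ with each $M_t \in \{I_2, E_1, E_2, E_1E_2\}$ (one fixed sign per such product). Two matrices have disjoint support if there is no position where both have a nonzero entry. Two orthogonal matrices $A,B$ are amicable if $AB^{-1}$ is symmetric and anti-amicable if $AB^{-1}$ is skew-symmetric. $\Delta_m$ is the graph whose vertices are the $4^m$ positive signed basis matrices, in which distinct $A,B$ are joined by a red edge (label $-1$) if they have disjoint support and are anti-amicable, by a blue edge (label $1$) if they have disjoint support and are amicable, and are not adjacent otherwise. $\Delta_m[-1]$ (resp. $\Delta_m[1]$) is the graph on the same vertex set with only the red (resp. blue) edges. A transversal graph of $\Delta_m$ is an induced subgraph of $\Delta_m$ that is a complete graph on $2^m$ vertices (with its edge colours). The edge-colour complement of an edge-coloured complete graph is obtained by swapping the colours red and blue on every edge. An automorphism of $\Delta_m$ swapping $\Delta_m[-1]$ and $\Delta_m[1]$ is a permutation of the vertices mapping red edges exactly onto blue edges and blue edges exactly onto red edges. *)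

theory Defs
  imports Main
begin

text \<open>Matrices are represented as functions nat => nat => int; an n x n matrix is
  zero outside the index range {0..<n} x {0..<n}.  All matrices occurring here
  have entries in {-1,0,1} (real monomial matrices with integer entries).\<close>

type_synonym mat = "nat \<Rightarrow> nat \<Rightarrow> int"

definition I2 :: mat where
  "I2 i j = (if i < 2 \<and> j < 2 \<and> i = j then 1 else 0)"

definition E1 :: mat where
  "E1 i j = (if i = 0 \<and> j = 1 then -1 else if i = 1 \<and> j = 0 then 1 else 0)"

definition E2 :: mat where
  "E2 i j = (if (i = 0 \<and> j = 1) \<or> (i = 1 \<and> j = 0) then 1 else 0)"

definition mmul :: "nat \<Rightarrow> mat \<Rightarrow> mat \<Rightarrow> mat" where
  "mmul n A B i j = (if i < n \<and> j < n then (\<Sum>k<n. A i k * B k j) else 0)"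

definition mtrans :: "mat \<Rightarrow> mat" where
  "mtrans A i j = A j i"

definition factor :: "nat \<Rightarrow> mat" where
  "factor t = (if t = 0 then I2 else if t = 1 then E1 else if t = 2 then E2
               else mmul 2 E1 E2)"

definition kron :: "nat \<Rightarrow> mat \<Rightarrow> mat \<Rightarrow> mat" where
  "kron q A B i j = A (i div q) (j div q) * B (i mod q) (j mod q)"

fun kron_list :: "mat list \<Rightarrow> mat" where
  "kron_list [] = (\<lambda>i j. if i = 0 \<and> j = 0 then 1 else 0)"
| "kron_list (M # Ms) = kron (2 ^ length Ms) M (kron_list Ms)"

definition basis :: "nat \<Rightarrow> mat set" where
  "basis m = {kron_list (map factor ts) | ts. length ts = m \<and> set ts \<subseteq> {0..<4}}"

definition disjoint_support :: "nat \<Rightarrow> mat \<Rightarrow> mat \<Rightarrow> bool" where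
  "disjoint_support n A B \<longleftrightarrow> (\<forall>i<n. \<forall>j<n. A i j = 0 \<or> B i j = 0)"

definition symmetric_mat :: "nat \<Rightarrow> mat \<Rightarrow> bool" where
  "symmetric_mat n C \<longleftrightarrow> (\<forall>i<n. \<forall>j<n. C j i = C i j)"

definition skew_mat :: "nat \<Rightarrow> mat \<Rightarrow> bool" where
  "skew_mat n C \<longleftrightarrow> (\<forall>i<n. \<forall>j<n. C j i = - C i j)"

text \<open>For orthogonal B (all basis matrices are orthogonal), B^{-1} = B^T.\<close>
definition amicable :: "nat \<Rightarrow> mat \<Rightarrow> mat \<Rightarrow> bool" where
  "amicable n A B \<longleftrightarrow> symmetric_mat n (mmul n A (mtrans B))"

definition anti_amicable :: "nat \<Rightarrow> mat \<Rightarrow> mat \<Rightarrow> bool" where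
  "anti_amicable n A B \<longleftrightarrow> skew_mat n (mmul n A (mtrans B))"

definition red :: "nat \<Rightarrow> mat \<Rightarrow> mat \<Rightarrow> bool" where
  "red m A B \<longleftrightarrow> A \<in> basis m \<and> B \<in> basis m \<and> A \<noteq> B \<and>
     disjoint_support (2^m) A B \<and> anti_amicable (2^m) A B"

definition blue :: "nat \<Rightarrow> mat \<Rightarrow> mat \<Rightarrow> bool" where
  "blue m A B \<longleftrightarrow> A \<in> basis m \<and> B \<in> basis m \<and> A \<noteq> B \<and>
     disjoint_support (2^m) A B \<and> amicable (2^m) A B"

text \<open>Edge-coloured graphs: (vertex set, red relation, blue relation).\<close>
type_synonym 'a ecgraph = "'a set \<times> ('a \<Rightarrow> 'a \<Rightarrow> bool) \<times> ('a \<Rightarrow> 'a \<Rightarrow> bool)"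

definition ec_iso :: "'a ecgraph \<Rightarrow> 'b ecgraph \<Rightarrow> ('a \<Rightarrow> 'b) \<Rightarrow> bool" where
  "ec_iso G H f \<longleftrightarrow> (case G of (V, R, B) \<Rightarrow> case H of (V', R', B') \<Rightarrow>
      bij_betw f V V' \<and>
      (\<forall>x\<in>V. \<forall>y\<in>V. (R x y \<longleftrightarrow> R' (f x) (f y)) \<and> (B x y \<longleftrightarrow> B' (f x) (f y))))"

definition ec_isomorphic :: "'a ecgraph \<Rightarrow> 'b ecgraph \<Rightarrow> bool" where
  "ec_isomorphic G H \<longleftrightarrow> (\<exists>f. ec_iso G H f)"

definition colour_complement :: "'a ecgraph \<Rightarrow> 'a ecgraph" where
  "colour_complement G = (case G of (V, R, B) \<Rightarrow> (V, B, R))"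

definition Delta :: "nat \<Rightarrow> mat ecgraph" where
  "Delta m = (basis m, red m, blue m)"

definition induced :: "nat \<Rightarrow> mat set \<Rightarrow> mat ecgraph" where
  "induced m S = (S, \<lambda>x y. x \<in> S \<and> y \<in> S \<and> red m x y, \<lambda>x y. x \<in> S \<and> y \<in> S \<and> blue m x y)"

definition transversal :: "nat \<Rightarrow> mat set \<Rightarrow> bool" where
  "transversal m S \<longleftrightarrow> S \<subseteq> basis m \<and> card S = 2^m \<and>
     (\<forall>x\<in>S. \<forall>y\<in>S. x \<noteq> y \<longrightarrow> red m x y \<or> blue m x y)"

definition swapping_automorphism :: "nat \<Rightarrow> (mat \<Rightarrow> mat) \<Rightarrow> bool" where
  "swapping_automorphism m \<pi> \<longleftrightarrow> bij_betw \<pi> (basis m) (basis m) \<and>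
     (\<forall>A\<in>basis m. \<forall>B\<in>basis m.
        (red m A B \<longleftrightarrow> blue m (\<pi> A) (\<pi> B)) \<and> (blue m A B \<longleftrightarrow> red m (\<pi> A) (\<pi> B)))"

end

theory Submission
  imports Defs
begin

text \<open>
  Writing each factor as \<open>\<plusminus>X\<^sup>x Z\<^sup>z\<close> codes the basis matrices of \<open>\<real>\<^sub>m\<^sub>,\<^sub>m\<close> by vectors
  \<open>(x, z) \<in> \<bbbF>\<^sub>2\<^sup>2\<^sup>m\<close>. Two basis matrices have disjoint support iff the \<open>x\<close>-parts of their codes
  differ, and \<open>A B\<^sup>T\<close> is symmetric or skew according to the quadratic form \<open>q(x, z) = x \<cdot> z\<close>
  of the sum of the codes. A red clique thus gives vectors with \<open>q = 1\<close> on all pairwise sums;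
  translating by one of them gives vectors that are pairwise non-orthogonal for the symplectic
  form polar to \<open>q\<close>, and there are at most \<open>2m + 1\<close> of those, since the subset sums of an
  even-sized such family are distinct. As \<open>2\<^sup>m > 2m + 2\<close> for \<open>m \<ge> 4\<close>, there is no red
  transversal, while the \<open>2\<^sup>m\<close> products of \<open>I\<close> and \<open>E\<^sub>2\<close> form a blue one; this gives (1) and
  (2). For \<open>m \<le> 3\<close> the shear \<open>(x, z) \<mapsto> (x, z + g x)\<close> swaps the colours whenever
  \<open>(x + y) \<cdot> (g x + g y) = 1\<close> for all \<open>x \<noteq> y\<close>, and such maps \<open>g\<close> exist.
\<close>

section \<open>Kronecker products of integer matrices\<close>

lemma sum_lessThan_mult:
  "(\<Sum>i<(p::nat)*q. f i) = (\<Sum>a<p. \<Sum>k<q. f (a*q + k) :: 'a::comm_monoid_add)"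
proof -
  have "(\<Sum>k<q. f (a*q + k)) = sum f {a*q..<a*q + q}" for a
    using sum.shift_bounds_nat_ivl[of f 0 "a*q" q] by (simp add: atLeast0LessThan add.commute)
  then show ?thesis
    by (simp add: sum.nat_group)
qed

lemma block_index_less: "a < p \<Longrightarrow> k < q \<Longrightarrow> a*q + k < (p::nat)*q"
proof -
  assume "a < p" "k < q"
  then have "a*q + k < a*q + q" and "a*q + q \<le> p*q"
    using mult_le_mono1[of "Suc a" p q] by simp_all
  then show ?thesis by linarith
qed

lemma kron_block: "k < q \<Longrightarrow> l < q \<Longrightarrow> kron q A B (a*q + k) (b*q + l) = A a b * B k l"
  by (simp add: kron_def)

definition hadamard :: "mat \<Rightarrow> mat \<Rightarrow> mat" where
  "hadamard A B i j = A i j * B i j"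

definition nonzero_mat :: "nat \<Rightarrow> mat \<Rightarrow> bool" where
  "nonzero_mat n A \<longleftrightarrow> (\<exists>i<n. \<exists>j<n. A i j \<noteq> 0)"

definition mtrace :: "nat \<Rightarrow> mat \<Rightarrow> int" where
  "mtrace n A = (\<Sum>i<n. A i i)"

definition mscale :: "int \<Rightarrow> mat \<Rightarrow> mat" where
  "mscale c A i j = c * A i j"

lemma hadamard_kron: "hadamard (kron q A B) (kron q C D) = kron q (hadamard A C) (hadamard B D)"
  by (simp add: hadamard_def kron_def fun_eq_iff)

lemma mtrans_kron: "mtrans (kron q A B) = kron q (mtrans A) (mtrans B)"
  by (simp add: mtrans_def kron_def fun_eq_iff)

lemma kron_mscale: "kron q (mscale c A) (mscale d B) = mscale (c*d) (kron q A B)"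
  by (simp add: mscale_def kron_def fun_eq_iff)

lemma nonzero_mat_kron:
  assumes "0 < q"
  shows "nonzero_mat (p*q) (kron q A B) \<longleftrightarrow> nonzero_mat p A \<and> nonzero_mat q B"
proof
  assume "nonzero_mat (p*q) (kron q A B)"
  then obtain i j where "i < p*q" "j < p*q" "A (i div q) (j div q) * B (i mod q) (j mod q) \<noteq> 0"
    by (auto simp: nonzero_mat_def kron_def)
  with assms show "nonzero_mat p A \<and> nonzero_mat q B"
    unfolding nonzero_mat_def by (metis div_less_iff_less_mult mod_less_divisor mult_eq_0_iff)
next
  assume "nonzero_mat p A \<and> nonzero_mat q B"
  then obtain a b k l where "a < p" "b < p" "A a b \<noteq> 0" "k < q" "l < q" "B k l \<noteq> 0"
    by (auto simp: nonzero_mat_def)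
  then show "nonzero_mat (p*q) (kron q A B)"
    unfolding nonzero_mat_def by (metis block_index_less kron_block mult_eq_0_iff)
qed

lemma mtrace_kron:
  assumes "0 < q"
  shows "mtrace (p*q) (kron q A B) = mtrace p A * mtrace q B"
  unfolding mtrace_def sum_lessThan_mult sum_product by (simp add: kron_block)

lemma mmul_kron_mtrans:
  assumes "0 < q"
  shows "mmul (p*q) (kron q A B) (mtrans (kron q C D)) =
         kron q (mmul p A (mtrans C)) (mmul q B (mtrans D))"
proof (intro ext)
  fix i j
  show "mmul (p*q) (kron q A B) (mtrans (kron q C D)) i j =
        kron q (mmul p A (mtrans C)) (mmul q B (mtrans D)) i j"
  proof (cases "i < p*q \<and> j < p*q")
    case True
    then have "i div q < p" "j div q < p"
      using assms by (simp_all add: div_less_iff_less_mult)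
    with True assms show ?thesis
      by (simp add: mmul_def mtrans_def kron_def sum_lessThan_mult sum_product mult_ac)
  next
    case False
    then have "mmul p A (mtrans C) (i div q) (j div q) = 0"
      using assms by (auto simp: mmul_def div_less_iff_less_mult)
    with False show ?thesis
      by (auto simp: mmul_def[of "p*q"] kron_def)
  qed
qed

lemma hadamard_kron_list:
  "length As = length Bs \<Longrightarrow>
   hadamard (kron_list As) (kron_list Bs) = kron_list (map2 hadamard As Bs)"
  by (induction As Bs rule: list_induct2)
    (simp add: hadamard_def fun_eq_iff, simp add: hadamard_kron)

lemma mmul_kron_list_mtrans:
  "length As = length Bs \<Longrightarrow>
   mmul (2^length As) (kron_list As) (mtrans (kron_list Bs)) =
   kron_list (map2 (\<lambda>A B. mmul 2 A (mtrans B)) As Bs)"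
proof (induction As Bs rule: list_induct2)
  case Nil
  show ?case by (simp add: mmul_def mtrans_def fun_eq_iff)
next
  case (Cons A As B Bs)
  then show ?case
    using mmul_kron_mtrans[of "2^length As" 2] by simp
qed

lemma nonzero_mat_kron_list:
  "nonzero_mat (2^length As) (kron_list As) \<longleftrightarrow> (\<forall>A\<in>set As. nonzero_mat 2 A)"
proof (induction As)
  case Nil
  show ?case by (simp add: nonzero_mat_def)
next
  case (Cons A As)
  then show ?case
    using nonzero_mat_kron[of "2^length As" 2] by simp
qed

lemma disjoint_support_iff_hadamard: "disjoint_support n A B \<longleftrightarrow> \<not> nonzero_mat n (hadamard A B)"
  by (auto simp: disjoint_support_def nonzero_mat_def hadamard_def)

lemma symmetric_skew_by_sign:
  assumes "mtrans K = mscale (if b then -1 else 1) K" and "nonzero_mat n K"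
  shows "symmetric_mat n K \<longleftrightarrow> \<not> b" and "skew_mat n K \<longleftrightarrow> b"
proof -
  have K: "K j i = (if b then - K i j else K i j)" for i j
    using fun_cong[OF fun_cong[OF assms(1)], of j i] by (simp add: mtrans_def mscale_def)
  obtain i j where ij: "i < n" "j < n" "K i j \<noteq> 0"
    using assms(2) by (auto simp: nonzero_mat_def)
  show "symmetric_mat n K \<longleftrightarrow> \<not> b"
  proof
    assume "symmetric_mat n K"
    then have "K j i = K i j"
      using ij unfolding symmetric_mat_def by blast
    with K[of i j] ij(3) show "\<not> b"
      by auto
  next
    assume "\<not> b"
    then have "K j i = K i j" for i j
      using K[of i j] by simp
    then show "symmetric_mat n K"
      unfolding symmetric_mat_def by blast
  qed
  show "skew_mat n K \<longleftrightarrow> b"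
  proof
    assume "skew_mat n K"
    then have "K j i = - K i j"
      using ij unfolding skew_mat_def by blast
    with K[of i j] ij(3) show b
      by (auto split: if_splits)
  next
    assume b
    then have "K j i = - K i j" for i j
      using K[of i j] by simp
    then show "skew_mat n K"
      unfolding skew_mat_def by blast
  qed
qed

section \<open>Binary code vectors\<close>

text \<open>Vectors \<open>(x, z)\<close> of \<open>\<bbbF>\<^sub>2\<^sup>2\<^sup>m\<close>, stored as the lists of pairs \<open>(x\<^sub>i, z\<^sub>i)\<close>.\<close>

type_synonym svec = "(bool \<times> bool) list"

definition vadd :: "svec \<Rightarrow> svec \<Rightarrow> svec" where
  "vadd v w = map2 (\<lambda>p q. (fst p \<noteq> fst q, snd p \<noteq> snd q)) v w"

fun quad :: "svec \<Rightarrow> bool" where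
  "quad [] = False"
| "quad (p # v) = ((fst p \<and> snd p) \<noteq> quad v)"

fun symplectic :: "svec \<Rightarrow> svec \<Rightarrow> bool" where
  "symplectic (p # v) (q # w) = (((fst p \<and> snd q) \<noteq> (fst q \<and> snd p)) \<noteq> symplectic v w)"
| "symplectic _ _ = False"

lemma length_vadd [simp]: "length (vadd v w) = min (length v) (length w)"
  by (simp add: vadd_def)

lemma vadd_Nil [simp]: "vadd [] w = []" "vadd v [] = []"
  by (simp_all add: vadd_def)

lemma vadd_Cons [simp]: "vadd (p # v) (q # w) = (fst p \<noteq> fst q, snd p \<noteq> snd q) # vadd v w"
  by (simp add: vadd_def)

lemma vadd_commute: "vadd v w = vadd w v"
  unfolding vadd_def by (induction v w rule: list_induct2') auto

lemma vadd_assoc: "vadd (vadd u v) w = vadd u (vadd v w)"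
proof (induction u arbitrary: v w)
  case Nil
  show ?case by (simp add: vadd_def)
next
  case (Cons p u)
  then show ?case by (cases v; cases w) (auto simp: vadd_def)
qed

lemma vadd_swap_middle: "vadd (vadd a b) (vadd c d) = vadd (vadd a c) (vadd b d)"
  by (metis vadd_assoc vadd_commute)

lemma vadd_vadd_cancel: "length v = length w \<Longrightarrow> vadd v (vadd v w) = w"
  by (induction v w rule: list_induct2) auto

lemma vadd_vadd_cancel_right: "length v = length w \<Longrightarrow> vadd (vadd v w) w = v"
  by (metis vadd_commute vadd_vadd_cancel)

lemma vadd_translate:
  "length u = length v \<Longrightarrow> length u = length w \<Longrightarrow> vadd (vadd u v) (vadd u w) = vadd v w"
  by (metis vadd_assoc vadd_commute vadd_vadd_cancel)

lemma quad_vadd: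
  "length v = length w \<Longrightarrow> quad (vadd v w) = ((quad v \<noteq> quad w) \<noteq> symplectic v w)"
  by (induction v w rule: list_induct2) auto

lemma symplectic_self: "\<not> symplectic v v"
  by (induction v) auto

lemma symplectic_vadd_left:
  "length u = length w \<Longrightarrow> length v = length w \<Longrightarrow>
   symplectic (vadd u v) w = (symplectic u w \<noteq> symplectic v w)"
proof (induction u arbitrary: v w)
  case Nil
  then show ?case by simp
next
  case (Cons p u)
  then show ?case by (cases v; cases w) auto
qed

lemma not_quad_vadd_if_map_snd_eq: "map snd v = map snd w \<Longrightarrow> \<not> quad (vadd v w)"
proof (induction v arbitrary: w)
  case (Cons p v)
  then show ?case by (cases w) auto
qed simp

lemma finite_svecs: "finite {v :: svec. length v = m}"
  using finite_lists_length_eq[of "UNIV :: (bool \<times> bool) set" m] by simp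

lemma card_svecs: "card {v :: svec. length v = m} = 4 ^ m"
proof -
  have "card (UNIV :: (bool \<times> bool) set) = 4"
    by (simp add: UNIV_Times_UNIV[symmetric] card_cartesian_product del: UNIV_Times_UNIV)
  then show ?thesis
    using card_lists_length_eq[of "UNIV :: (bool \<times> bool) set" m] by simp
qed

section \<open>The basis matrices as Kronecker products of Pauli matrices\<close>

definition pauli_index :: "bool \<times> bool \<Rightarrow> nat" where
  "pauli_index p = (if fst p then (if snd p then 1 else 2) else (if snd p then 3 else 0))"

text \<open>With \<open>X = E\<^sub>2\<close> and \<open>Z = diag(1, -1)\<close> one has \<open>E\<^sub>1 = X Z\<close> and \<open>E\<^sub>1 E\<^sub>2 = -Z\<close>, so
  \<open>pauli (x, z)\<close> is \<open>\<plusminus>X\<^sup>x Z\<^sup>z\<close>.\<close>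

definition pauli :: "bool \<times> bool \<Rightarrow> mat" where
  "pauli p = factor (pauli_index p)"

definition factor_code :: "nat \<Rightarrow> bool \<times> bool" where
  "factor_code s = (s = 1 \<or> s = 2, s = 1 \<or> s = 3)"

lemma pauli_index_less: "pauli_index p < 4"
  by (simp add: pauli_index_def)

lemma pauli_index_factor_code: "s < 4 \<Longrightarrow> pauli_index (factor_code s) = s"
  by (auto simp: pauli_index_def factor_code_def)

lemma pauli_apply:
  "pauli (x, z) i j = (if i < 2 \<and> j < 2 \<and> (i \<noteq> j) = x then (if z \<and> i = 0 then -1 else 1) else 0)"
  by (auto simp: pauli_def pauli_index_def factor_def I2_def E1_def E2_def mmul_def numeral_2_eq_2)

definition pauli_gram :: "bool \<times> bool \<Rightarrow> bool \<times> bool \<Rightarrow> mat" where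
  "pauli_gram p q = mmul 2 (pauli p) (mtrans (pauli q))"

definition pauli_sign :: "bool \<times> bool \<Rightarrow> bool \<times> bool \<Rightarrow> int" where
  "pauli_sign p q = (if fst p \<noteq> fst q \<and> snd p \<noteq> snd q then -1 else 1)"

lemma pauli_gram_apply:
  "pauli_gram p q i j =
     (if i < 2 \<and> j < 2 then pauli p i 0 * pauli q j 0 + pauli p i 1 * pauli q j 1 else 0)"
  by (simp add: pauli_gram_def mmul_def mtrans_def numeral_2_eq_2)

lemma nat_less_2_iff: "(i::nat) < 2 \<longleftrightarrow> i = 0 \<or> i = 1"
  by auto

lemma mtrans_pauli_gram: "mtrans (pauli_gram p q) = mscale (pauli_sign p q) (pauli_gram p q)"
proof (intro ext)
  fix i j
  show "mtrans (pauli_gram p q) i j = mscale (pauli_sign p q) (pauli_gram p q) i j"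
    unfolding mtrans_def mscale_def pauli_gram_apply
    by (cases p; cases q) (simp_all add: pauli_apply pauli_sign_def)
qed

lemma nonzero_mat_2_iff:
  "nonzero_mat 2 A \<longleftrightarrow> A 0 0 \<noteq> 0 \<or> A 0 1 \<noteq> 0 \<or> A 1 0 \<noteq> 0 \<or> A 1 1 \<noteq> 0"
  unfolding nonzero_mat_def nat_less_2_iff by auto

lemma nonzero_pauli_gram: "nonzero_mat 2 (pauli_gram p q)"
  unfolding nonzero_mat_2_iff pauli_gram_apply
  by (cases p; cases q) (simp_all add: pauli_apply)

lemma nonzero_hadamard_pauli_iff: "nonzero_mat 2 (hadamard (pauli p) (pauli q)) \<longleftrightarrow> fst p = fst q"
  unfolding nonzero_mat_2_iff hadamard_def
  by (cases p; cases q) (simp_all add: pauli_apply)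

lemma mtrace_pauli_gram: "mtrace 2 (pauli_gram p q) = (if p = q then 2 else 0)"
  unfolding mtrace_def pauli_gram_apply
  by (cases p; cases q) (simp_all add: pauli_apply numeral_2_eq_2)

definition basis_mat :: "svec \<Rightarrow> mat" where
  "basis_mat v = kron_list (map pauli v)"

lemma basis_eq_image_basis_mat: "basis m = basis_mat ` {v. length v = m}"
proof
  show "basis m \<subseteq> basis_mat ` {v. length v = m}"
  proof
    fix A assume "A \<in> basis m"
    then obtain ts where ts: "A = kron_list (map factor ts)" "length ts = m" "set ts \<subseteq> {0..<4}"
      unfolding basis_def by blast
    then have "map factor ts = map pauli (map factor_code ts)"
      by (auto simp: pauli_def pauli_index_factor_code subset_iff)
    with ts show "A \<in> basis_mat ` {v. length v = m}"
      unfolding basis_mat_def by (intro image_eqI[of _ _ "map factor_code ts"]) simp_all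
  qed
  show "basis_mat ` {v. length v = m} \<subseteq> basis m"
    unfolding basis_def basis_mat_def pauli_def
    using pauli_index_less by (auto simp: comp_def intro!: exI[of _ "map pauli_index _"])
qed

lemma mmul_basis_mat_mtrans:
  "length v = m \<Longrightarrow> length w = m \<Longrightarrow>
   mmul (2^m) (basis_mat v) (mtrans (basis_mat w)) = kron_list (map2 pauli_gram v w)"
  using mmul_kron_list_mtrans[of "map pauli v" "map pauli w"]
  by (simp add: basis_mat_def pauli_gram_def zip_map_map split_def comp_def)

lemma hadamard_basis_mat:
  "length v = length w \<Longrightarrow>
   hadamard (basis_mat v) (basis_mat w) = kron_list (map2 (\<lambda>p q. hadamard (pauli p) (pauli q)) v w)"
  using hadamard_kron_list[of "map pauli v" "map pauli w"]
  by (simp add: basis_mat_def zip_map_map split_def comp_def)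

lemma mtrans_kron_list_pauli_gram:
  "length v = length w \<Longrightarrow>
   mtrans (kron_list (map2 pauli_gram v w)) =
   mscale (if quad (vadd v w) then -1 else 1) (kron_list (map2 pauli_gram v w))"
proof (induction v w rule: list_induct2)
  case Nil
  show ?case by (simp add: mtrans_def mscale_def vadd_def fun_eq_iff)
next
  case (Cons p v q w)
  then show ?case
    by (simp add: mtrans_kron mtrans_pauli_gram kron_mscale vadd_def pauli_sign_def)
qed

lemma mtrace_kron_list_pauli_gram:
  "length v = length w \<Longrightarrow>
   mtrace (2^length v) (kron_list (map2 pauli_gram v w)) = (if v = w then 2^length v else 0)"
proof (induction v w rule: list_induct2)
  case Nil
  show ?case by (simp add: mtrace_def)
next
  case (Cons p v q w)
  then show ?case
    using mtrace_kron[of "2^length v" 2] by (simp add: mtrace_pauli_gram)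
qed

lemma nonzero_kron_list_pauli_gram:
  "length v = length w \<Longrightarrow> nonzero_mat (2^length v) (kron_list (map2 pauli_gram v w))"
  using nonzero_mat_kron_list[of "map2 pauli_gram v w"] by (auto simp: nonzero_pauli_gram)

lemma basis_mat_gram_sign:
  assumes "length v = m" "length w = m"
  defines "K \<equiv> mmul (2^m) (basis_mat v) (mtrans (basis_mat w))"
  shows "mtrans K = mscale (if quad (vadd v w) then -1 else 1) K" and "nonzero_mat (2^m) K"
  using assms mtrans_kron_list_pauli_gram[of v w] nonzero_kron_list_pauli_gram[of v w]
  by (simp_all add: mmul_basis_mat_mtrans)

lemma amicable_basis_mat_iff:
  "length v = m \<Longrightarrow> length w = m \<Longrightarrow>
   amicable (2^m) (basis_mat v) (basis_mat w) \<longleftrightarrow> \<not> quad (vadd v w)"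
  unfolding amicable_def by (rule symmetric_skew_by_sign(1)[OF basis_mat_gram_sign])

lemma anti_amicable_basis_mat_iff:
  "length v = m \<Longrightarrow> length w = m \<Longrightarrow>
   anti_amicable (2^m) (basis_mat v) (basis_mat w) \<longleftrightarrow> quad (vadd v w)"
  unfolding anti_amicable_def by (rule symmetric_skew_by_sign(2)[OF basis_mat_gram_sign])

lemma disjoint_support_basis_mat_iff:
  assumes "length v = m" "length w = m"
  shows "disjoint_support (2^m) (basis_mat v) (basis_mat w) \<longleftrightarrow> map fst v \<noteq> map fst w"
proof -
  have "nonzero_mat (2^m) (hadamard (basis_mat v) (basis_mat w)) \<longleftrightarrow>
        (\<forall>(p, q)\<in>set (zip v w). fst p = fst q)"
    using assms nonzero_mat_kron_list[of "map2 (\<lambda>p q. hadamard (pauli p) (pauli q)) v w"]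
    by (auto simp: hadamard_basis_mat nonzero_hadamard_pauli_iff)
  also have "\<dots> \<longleftrightarrow> map fst v = map fst w"
    using assms by (simp add: list_eq_iff_zip_eq zip_map_map split_def)
  finally show ?thesis
    by (simp add: disjoint_support_iff_hadamard)
qed

lemma inj_on_basis_mat: "inj_on basis_mat {v. length v = m}"
proof (rule inj_onI)
  fix v w assume "v \<in> {v. length v = m}" "w \<in> {v. length v = m}" "basis_mat v = basis_mat w"
  txt \<open>The trace of \<open>A B\<^sup>T\<close> is an inner product for which the basis is orthogonal.\<close>
  then have "mtrace (2^m) (mmul (2^m) (basis_mat v) (mtrans (basis_mat w))) =
             mtrace (2^m) (mmul (2^m) (basis_mat w) (mtrans (basis_mat w)))"
    by simp
  then show "v = w"
    using \<open>v \<in> _\<close> \<open>w \<in> _\<close>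
      mtrace_kron_list_pauli_gram[of v w] mtrace_kron_list_pauli_gram[of w w]
    by (simp add: mmul_basis_mat_mtrans split: if_splits)
qed

lemma basis_mat_in_basis: "length v = m \<Longrightarrow> basis_mat v \<in> basis m"
  by (simp add: basis_eq_image_basis_mat)

lemma basis_mat_neq_if_fst_neq:
  assumes "length v = m" "length w = m" "map fst v \<noteq> map fst w"
  shows "basis_mat v \<noteq> basis_mat w"
proof -
  have "v \<noteq> w"
    using assms(3) by blast
  then show ?thesis
    using assms(1,2) inj_on_basis_mat[of m] unfolding inj_on_def by blast
qed

lemma red_basis_mat_iff:
  assumes "length v = m" "length w = m"
  shows "red m (basis_mat v) (basis_mat w) \<longleftrightarrow> map fst v \<noteq> map fst w \<and> quad (vadd v w)"
proof -
  have "red m (basis_mat v) (basis_mat w) \<longleftrightarrow>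
        basis_mat v \<noteq> basis_mat w \<and> map fst v \<noteq> map fst w \<and> quad (vadd v w)"
    using assms
    by (simp add: red_def basis_mat_in_basis disjoint_support_basis_mat_iff anti_amicable_basis_mat_iff)
  with basis_mat_neq_if_fst_neq[OF assms] show ?thesis
    by blast
qed

lemma blue_basis_mat_iff:
  assumes "length v = m" "length w = m"
  shows "blue m (basis_mat v) (basis_mat w) \<longleftrightarrow> map fst v \<noteq> map fst w \<and> \<not> quad (vadd v w)"
proof -
  have "blue m (basis_mat v) (basis_mat w) \<longleftrightarrow>
        basis_mat v \<noteq> basis_mat w \<and> map fst v \<noteq> map fst w \<and> \<not> quad (vadd v w)"
    using assms
    by (simp add: blue_def basis_mat_in_basis disjoint_support_basis_mat_iff amicable_basis_mat_iff)
  with basis_mat_neq_if_fst_neq[OF assms] show ?thesis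
    by blast
qed

section \<open>Red cliques are small\<close>

definition vsum :: "nat \<Rightarrow> svec list \<Rightarrow> svec" where
  "vsum m vs = foldr vadd vs (replicate m (False, False))"

lemma length_vsum: "\<forall>v\<in>set vs. length v = m \<Longrightarrow> length (vsum m vs) = m"
  by (induction vs) (simp_all add: vsum_def)

lemma symplectic_replicate_zero: "\<not> symplectic (replicate m (False, False)) w"
  by (induction m arbitrary: w) (auto elim: symplectic.elims)

lemma symplectic_vsum:
  "\<forall>v\<in>set vs. length v = m \<Longrightarrow> length w = m \<Longrightarrow>
   symplectic (vsum m vs) w = odd (length (filter (\<lambda>v. symplectic v w) vs))"
proof (induction vs)
  case Nil
  then show ?case by (simp add: vsum_def symplectic_replicate_zero)
next
  case (Cons v vs)
  then have "symplectic (vsum m (v # vs)) w = (symplectic v w \<noteq> symplectic (vsum m vs) w)"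
    by (simp add: vsum_def symplectic_vadd_left length_vsum[unfolded vsum_def])
  with Cons show ?case
    by simp
qed

lemma two_pow_card_le_if_pairwise_symplectic:
  assumes U: "U \<subseteq> {v. length v = m}" and pw: "pairwise symplectic U" and even: "even (card U)"
  shows "(2::nat) ^ card U \<le> 4 ^ m"
proof -
  have "finite U"
    using U finite_svecs finite_subset by blast
  then obtain us where us: "set us = U" "distinct us"
    using finite_distinct_list by blast
  txt \<open>The subset sums of \<open>U\<close> are distinct: against \<open>u \<in> U\<close> the sum over \<open>T\<close> gives the
    parity of \<open>|T|\<close> flipped by \<open>u \<in> T\<close>, and as \<open>|U|\<close> is even, \<open>U - T\<close> has the parity of \<open>T\<close>.\<close>
  define f where "f T = vsum m (filter (\<lambda>v. v \<in> T) us)" for T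
  have parity: "symplectic (f T) u \<longleftrightarrow> odd (card T) \<noteq> (u \<in> T)" if "T \<subseteq> U" "u \<in> U" for T u
  proof -
    have "set (filter (\<lambda>v. v \<in> T \<and> symplectic v u) us) = T - {u}"
      using us(1) that pw symplectic_self unfolding pairwise_def by auto
    then have "length (filter (\<lambda>v. symplectic v u) (filter (\<lambda>v. v \<in> T) us)) = card (T - {u})"
      using distinct_card[of "filter (\<lambda>v. v \<in> T \<and> symplectic v u) us"] us(2)
      by (simp add: conj_commute)
    moreover have "finite T"
      using \<open>finite U\<close> that(1) finite_subset by blast
    ultimately show ?thesis
      using that U us(1) unfolding f_def
      by (subst symplectic_vsum[where m = m]) (auto simp: card_Diff_singleton_if card_gt_0_iff)
  qed
  have "inj_on f (Pow U)"
  proof (rule inj_onI)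
    fix T T' assume T: "T \<in> Pow U" "T' \<in> Pow U" "f T = f T'"
    then have same: "(odd (card T) \<noteq> (u \<in> T)) = (odd (card T') \<noteq> (u \<in> T'))" if "u \<in> U" for u
      using parity that by (metis PowD)
    show "T = T'"
    proof (cases "odd (card T) = odd (card T')")
      case True
      with same T(1,2) show ?thesis
        by blast
    next
      case False
      with same T(1,2) have "T' = U - T"
        by blast
      then have "card T' + card T = card U"
        using T(1) \<open>finite U\<close> by (simp add: card_Diff_subset card_mono finite_subset)
      with False even show ?thesis
        by presburger
    qed
  qed
  moreover have "f ` Pow U \<subseteq> {v. length v = m}"
    using U us(1) by (auto simp: f_def intro!: length_vsum)
  ultimately have "card (Pow U) \<le> card {v :: svec. length v = m}"
    using card_inj_on_le finite_svecs by blast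
  then show ?thesis
    using card_Pow[OF \<open>finite U\<close>] card_svecs by simp
qed

lemma card_le_if_pairwise_symplectic:
  assumes U: "U \<subseteq> {v. length v = m}" and pw: "pairwise symplectic U"
  shows "card U \<le> 2*m + 1"
proof (rule ccontr)
  assume "\<not> card U \<le> 2*m + 1"
  then obtain U' where U': "U' \<subseteq> U" "card U' = 2*m + 2"
    using obtain_subset_with_card_n[of "2*m + 2" U] by auto
  then have "(2::nat) ^ (2*m + 2) \<le> 4 ^ m"
    using two_pow_card_le_if_pairwise_symplectic[of U' m] U pairwise_subset[OF pw] by auto
  also have "\<dots> = 2 ^ (2*m)"
    by (simp add: power_mult)
  finally show False
    by simp
qed

lemma card_le_if_pairwise_quad:
  assumes W: "W \<subseteq> {v. length v = m}" and pw: "pairwise (\<lambda>v w. quad (vadd v w)) W"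
  shows "card W \<le> 2*m + 2"
proof (cases "W = {}")
  case False
  then obtain w0 where w0: "w0 \<in> W"
    by blast
  have len: "length v = m" if "v \<in> W" for v
    using W that by blast
  txt \<open>By polarisation, translating by \<open>w0\<close> makes the vectors pairwise non-orthogonal.\<close>
  define U where "U = vadd w0 ` (W - {w0})"
  have "inj_on (vadd w0) (W - {w0})"
  proof (rule inj_onI)
    fix v v' assume "v \<in> W - {w0}" "v' \<in> W - {w0}" "vadd w0 v = vadd w0 v'"
    then show "v = v'"
      using vadd_vadd_cancel[of w0 v] vadd_vadd_cancel[of w0 v'] len w0 by force
  qed
  then have "card U = card W - 1"
    using w0 finite_subset[OF W finite_svecs] by (simp add: U_def card_image)
  moreover have "U \<subseteq> {v. length v = m}"
    using len w0 by (auto simp: U_def)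
  moreover have "pairwise symplectic U"
  proof (rule pairwiseI)
    fix u u' assume "u \<in> U" "u' \<in> U" "u \<noteq> u'"
    then obtain v v' where v: "v \<in> W - {w0}" "v' \<in> W - {w0}" "v \<noteq> v'"
      and u: "u = vadd w0 v" "u' = vadd w0 v'"
      unfolding U_def by blast
    have "quad u" "quad u'" "quad (vadd v v')"
      using pw w0 v unfolding u pairwise_def by auto
    moreover have "vadd u u' = vadd v v'" "length u = length u'"
      using len w0 v unfolding u by (simp_all add: vadd_translate)
    ultimately show "symplectic u u'"
      using quad_vadd[of u u'] by simp
  qed
  ultimately have "card W - 1 \<le> 2*m + 1"
    using card_le_if_pairwise_symplectic by metis
  then show ?thesis
    by simp
qed simp

lemma card_le_if_pairwise_red:
  assumes S: "S \<subseteq> basis m" and pw: "pairwise (red m) S"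
  shows "card S \<le> 2*m + 2"
proof -
  define W where "W = {v. length v = m \<and> basis_mat v \<in> S}"
  have S_eq: "S = basis_mat ` W"
    using S by (auto simp: W_def basis_eq_image_basis_mat)
  have inj: "inj_on basis_mat W"
    using inj_on_basis_mat[of m] by (rule inj_on_subset) (auto simp: W_def)
  have "pairwise (\<lambda>v w. quad (vadd v w)) W"
  proof (rule pairwiseI)
    fix v w assume "v \<in> W" "w \<in> W" "v \<noteq> w"
    then have "red m (basis_mat v) (basis_mat w)"
      using pw inj unfolding S_eq pairwise_def inj_on_def by blast
    with \<open>v \<in> W\<close> \<open>w \<in> W\<close> show "quad (vadd v w)"
      by (simp add: W_def red_basis_mat_iff)
  qed
  then have "card W \<le> 2*m + 2"
    by (rule card_le_if_pairwise_quad[rotated]) (auto simp: W_def)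
  then show ?thesis
    by (simp add: S_eq card_image[OF inj])
qed

lemma two_mult_add_two_less_power: "4 \<le> m \<Longrightarrow> 2*m + 2 < (2::nat) ^ m"
  by (induction m rule: dec_induct) simp_all

lemma not_pairwise_red_if_card_eq_pow:
  assumes "4 \<le> m" "S \<subseteq> basis m" "card S = 2 ^ m"
  shows "\<not> pairwise (red m) S"
  using card_le_if_pairwise_red[OF assms(2)] two_mult_add_two_less_power[OF assms(1)] assms(3)
  by linarith

section \<open>A blue transversal\<close>

text \<open>The products of the factors \<open>I\<close> and \<open>E\<^sub>2\<close>.\<close>

definition sym_transversal :: "nat \<Rightarrow> mat set" where
  "sym_transversal m = basis_mat ` {v. set v \<subseteq> UNIV \<times> {False} \<and> length v = m}"

lemma sym_transversal_subset_basis: "sym_transversal m \<subseteq> basis m"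
  by (auto simp: sym_transversal_def basis_eq_image_basis_mat)

lemma card_sym_transversal: "card (sym_transversal m) = 2 ^ m"
proof -
  have "inj_on basis_mat {v. set v \<subseteq> UNIV \<times> {False} \<and> length v = m}"
    by (rule inj_on_subset[OF inj_on_basis_mat[of m]]) auto
  moreover have "card (UNIV \<times> {False} :: (bool \<times> bool) set) = 2"
    by (simp add: card_cartesian_product)
  ultimately show ?thesis
    using card_lists_length_eq[of "UNIV \<times> {False} :: (bool \<times> bool) set" m]
    by (simp add: sym_transversal_def card_image)
qed

lemma pairwise_blue_sym_transversal: "pairwise (blue m) (sym_transversal m)"
proof (rule pairwiseI)
  fix A B assume "A \<in> sym_transversal m" "B \<in> sym_transversal m" "A \<noteq> B"
  then obtain v w where vw: "A = basis_mat v" "B = basis_mat w" "v \<noteq> w"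
      "length v = m" "length w = m" "set v \<subseteq> UNIV \<times> {False}" "set w \<subseteq> UNIV \<times> {False}"
    unfolding sym_transversal_def by blast
  then have snd: "map snd v = replicate m False" "map snd w = replicate m False"
    by (intro replicate_eqI; force)+
  with vw(3) have "map fst v \<noteq> map fst w"
    by (metis zip_map_fst_snd)
  moreover have "\<not> quad (vadd v w)"
    using snd by (simp add: not_quad_vadd_if_map_snd_eq)
  ultimately show "blue m A B"
    using vw by (simp add: blue_basis_mat_iff)
qed

lemma transversal_sym_transversal: "transversal m (sym_transversal m)"
  using sym_transversal_subset_basis card_sym_transversal pairwise_blue_sym_transversal
  unfolding transversal_def pairwise_def by blast

lemma not_iso_colour_complement_of_blue_clique:
  assumes m: "4 \<le> m" and S: "transversal m S" and T: "pairwise (blue m) T"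
  shows "\<not> ec_isomorphic (induced m S) (colour_complement (induced m T))"
proof
  assume "ec_isomorphic (induced m S) (colour_complement (induced m T))"
  then obtain f where f: "bij_betw f S T"
    and col: "\<forall>x\<in>S. \<forall>y\<in>S. red m x y \<longleftrightarrow> f x \<in> T \<and> f y \<in> T \<and> blue m (f x) (f y)"
    by (auto simp: ec_isomorphic_def ec_iso_def induced_def colour_complement_def)
  have "pairwise (red m) S"
  proof (rule pairwiseI)
    fix x y assume "x \<in> S" "y \<in> S" "x \<noteq> y"
    with f have "f x \<in> T" "f y \<in> T" "f x \<noteq> f y"
      by (auto simp: bij_betw_def inj_on_def)
    with T col \<open>x \<in> S\<close> \<open>y \<in> S\<close> show "red m x y"
      unfolding pairwise_def by blast
  qed
  with S m show False
    using not_pairwise_red_if_card_eq_pow unfolding transversal_def by blast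
qed

lemma no_blue_to_red_bijection:
  assumes m: "4 \<le> m" and \<pi>: "bij_betw \<pi> (basis m) (basis m)"
    and col: "\<forall>A\<in>basis m. \<forall>B\<in>basis m. blue m A B \<longrightarrow> red m (\<pi> A) (\<pi> B)"
  shows False
proof -
  have inj: "inj_on \<pi> (sym_transversal m)"
    using \<pi> sym_transversal_subset_basis by (auto simp: bij_betw_def intro: inj_on_subset)
  have "\<pi> ` sym_transversal m \<subseteq> basis m"
    using \<pi> sym_transversal_subset_basis by (auto simp: bij_betw_def)
  moreover have "card (\<pi> ` sym_transversal m) = 2 ^ m"
    by (simp add: card_image[OF inj] card_sym_transversal)
  moreover have "pairwise (red m) (\<pi> ` sym_transversal m)"
  proof (rule pairwiseI)
    fix A B assume "A \<in> \<pi> ` sym_transversal m" "B \<in> \<pi> ` sym_transversal m" "A \<noteq> B"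
    then obtain x y where "x \<in> sym_transversal m" "y \<in> sym_transversal m" "x \<noteq> y"
      and "A = \<pi> x" "B = \<pi> y"
      by blast
    then show "red m A B"
      using col pairwise_blue_sym_transversal sym_transversal_subset_basis
      unfolding pairwise_def by blast
  qed
  ultimately show False
    using not_pairwise_red_if_card_eq_pow[OF m] by blast
qed

lemma no_swapping_automorphism: "4 \<le> m \<Longrightarrow> \<not> swapping_automorphism m \<pi>"
  using no_blue_to_red_bijection[of m \<pi>] unfolding swapping_automorphism_def by blast

lemma no_pairing_with_unmatched_member:
  assumes "X \<in> Q" and "\<And>S. S \<in> Q \<Longrightarrow> \<not> R S X"
  shows "\<not> (\<exists>P. (\<forall>p\<in>P. \<exists>S S'. p = {S, S'} \<and> S \<noteq> S' \<and> R S S' \<and> R S' S)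
              \<and> (\<forall>p\<in>P. \<forall>q\<in>P. p \<noteq> q \<longrightarrow> p \<inter> q = {})
              \<and> \<Union>P = Q)"
proof
  assume "\<exists>P. (\<forall>p\<in>P. \<exists>S S'. p = {S, S'} \<and> S \<noteq> S' \<and> R S S' \<and> R S' S)
              \<and> (\<forall>p\<in>P. \<forall>q\<in>P. p \<noteq> q \<longrightarrow> p \<inter> q = {})
              \<and> \<Union>P = Q"
  then obtain P where pairs: "\<forall>p\<in>P. \<exists>S S'. p = {S, S'} \<and> S \<noteq> S' \<and> R S S' \<and> R S' S"
    and cover: "\<Union>P = Q"
    by blast
  obtain p where "p \<in> P" "X \<in> p"
    using assms(1) cover by blast
  then obtain S S' where "p = {S, S'}" "R S S'" "R S' S"
    using pairs by blast
  moreover have "S \<in> Q" "S' \<in> Q"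
    using \<open>p \<in> P\<close> \<open>p = {S, S'}\<close> cover by blast+
  ultimately show False
    using \<open>X \<in> p\<close> assms(2) by blast
qed

lemma not_iso_colour_complement_sym_transversal:
  "4 \<le> m \<Longrightarrow> transversal m S \<Longrightarrow>
   \<not> ec_isomorphic (induced m S) (colour_complement (induced m (sym_transversal m)))"
  using not_iso_colour_complement_of_blue_clique pairwise_blue_sym_transversal by blast

lemma transversal_without_complement:
  "4 \<le> m \<Longrightarrow> \<exists>S. transversal m S \<and>
     \<not> (\<exists>S'. transversal m S' \<and> ec_isomorphic (induced m S') (colour_complement (induced m S)))"
  using transversal_sym_transversal not_iso_colour_complement_sym_transversal by blast

lemma no_colour_reversing_permutation:
  "4 \<le> m \<Longrightarrow> \<not> (\<exists>\<pi>. bij_betw \<pi> (basis m) (basis m) \<and>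
     (\<forall>A\<in>basis m. \<forall>B\<in>basis m.
        (blue m A B \<longrightarrow> red m (\<pi> A) (\<pi> B)) \<and> (red m A B \<longrightarrow> blue m (\<pi> A) (\<pi> B))))"
  using no_blue_to_red_bijection by blast

lemma no_complementary_pairing:
  "4 \<le> m \<Longrightarrow> \<not> (\<exists>P. (\<forall>p\<in>P. \<exists>S S'. p = {S, S'} \<and> S \<noteq> S' \<and>
        ec_isomorphic (induced m S) (colour_complement (induced m S')) \<and>
        ec_isomorphic (induced m S') (colour_complement (induced m S)))
     \<and> (\<forall>p\<in>P. \<forall>q\<in>P. p \<noteq> q \<longrightarrow> p \<inter> q = {})
     \<and> \<Union>P = {S. transversal m S \<and> \<not> ec_isomorphic (induced m S) (colour_complement (induced m S))})"
  by (rule no_pairing_with_unmatched_member[where X = "sym_transversal m"])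
    (simp_all add: transversal_sym_transversal not_iso_colour_complement_sym_transversal)

section \<open>Colour-swapping automorphisms for small m\<close>

definition bxor :: "bool list \<Rightarrow> bool list \<Rightarrow> bool list" where
  "bxor x y = map2 (\<noteq>) x y"

fun bdot :: "bool list \<Rightarrow> bool list \<Rightarrow> bool" where
  "bdot (a # x) (b # y) = ((a \<and> b) \<noteq> bdot x y)"
| "bdot _ _ = False"

definition zlift :: "bool list \<Rightarrow> svec" where
  "zlift z = map (Pair False) z"

lemma map_fst_vadd: "map fst (vadd v w) = bxor (map fst v) (map fst w)"
  by (simp add: vadd_def bxor_def zip_map_map split_def comp_def)

lemma map_fst_vadd_zlift: "length v = length z \<Longrightarrow> map fst (vadd v (zlift z)) = map fst v"
  by (induction v z rule: list_induct2) (simp_all add: zlift_def)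

lemma vadd_zlift: "vadd (zlift y) (zlift z) = zlift (bxor y z)"
  by (simp add: vadd_def bxor_def zlift_def zip_map_map split_def comp_def)

lemma length_zlift [simp]: "length (zlift z) = length z"
  by (simp add: zlift_def)

lemma quad_zlift: "\<not> quad (zlift z)"
  by (induction z) (simp_all add: zlift_def)

lemma symplectic_zlift: "length v = length z \<Longrightarrow> symplectic v (zlift z) = bdot (map fst v) z"
  by (induction v z rule: list_induct2) (simp_all add: zlift_def)

definition nonorthogonal_differences :: "nat \<Rightarrow> (bool list \<Rightarrow> bool list) \<Rightarrow> bool" where
  "nonorthogonal_differences m g \<longleftrightarrow>
     (\<forall>x. length x = m \<longrightarrow> length (g x) = m) \<and>
     (\<forall>x y. length x = m \<longrightarrow> length y = m \<longrightarrow> x \<noteq> y \<longrightarrow> bdot (bxor x y) (bxor (g x) (g y)))"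

definition shear :: "(bool list \<Rightarrow> bool list) \<Rightarrow> svec \<Rightarrow> svec" where
  "shear g v = vadd v (zlift (g (map fst v)))"

context
  fixes m g
  assumes g: "nonorthogonal_differences m g"
begin

lemma length_shear: "length v = m \<Longrightarrow> length (shear g v) = m"
  using g by (simp add: shear_def zlift_def nonorthogonal_differences_def)

lemma map_fst_shear: "length v = m \<Longrightarrow> map fst (shear g v) = map fst v"
  using g by (simp add: shear_def map_fst_vadd_zlift nonorthogonal_differences_def)

lemma shear_shear: "length v = m \<Longrightarrow> shear g (shear g v) = v"
  using g map_fst_shear[of v]
  by (simp add: shear_def vadd_vadd_cancel_right nonorthogonal_differences_def)

lemma quad_vadd_shear:
  assumes "length v = m" "length w = m" "map fst v \<noteq> map fst w"
  shows "quad (vadd (shear g v) (shear g w)) \<longleftrightarrow> \<not> quad (vadd v w)"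
proof -
  let ?d = "bxor (g (map fst v)) (g (map fst w))"
  have "vadd (shear g v) (shear g w) = vadd (vadd v w) (zlift ?d)"
    by (simp add: shear_def vadd_swap_middle vadd_zlift)
  moreover have "length ?d = m"
    using g assms(1,2) by (simp add: bxor_def nonorthogonal_differences_def)
  moreover have "bdot (map fst (vadd v w)) ?d"
    using g assms by (simp add: map_fst_vadd nonorthogonal_differences_def)
  ultimately show ?thesis
    using assms(1,2) by (simp add: quad_vadd quad_zlift symplectic_zlift)
qed

lemma swapping_automorphism_shear:
  "swapping_automorphism m (basis_mat \<circ> shear g \<circ> inv_into {v. length v = m} basis_mat)"
  (is "swapping_automorphism m ?\<pi>")
proof -
  have \<pi>: "?\<pi> (basis_mat v) = basis_mat (shear g v)" if "length v = m" for v
    using that by (simp add: inv_into_f_f[OF inj_on_basis_mat])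
  have invol: "?\<pi> (?\<pi> A) = A" and closed: "?\<pi> A \<in> basis m" if A: "A \<in> basis m" for A
  proof -
    obtain v where "length v = m" "A = basis_mat v"
      using A by (auto simp: basis_eq_image_basis_mat)
    then show "?\<pi> (?\<pi> A) = A" "?\<pi> A \<in> basis m"
      by (simp_all only: \<pi> length_shear shear_shear basis_mat_in_basis)
  qed
  have "bij_betw ?\<pi> (basis m) (basis m)"
    using invol closed by (intro bij_betw_byWitness[where f' = ?\<pi>]) blast+
  moreover have "(red m A B \<longleftrightarrow> blue m (?\<pi> A) (?\<pi> B)) \<and> (blue m A B \<longleftrightarrow> red m (?\<pi> A) (?\<pi> B))"
    if AB: "A \<in> basis m" "B \<in> basis m" for A B
  proof -
    obtain v w where vw: "length v = m" "length w = m" and "A = basis_mat v" "B = basis_mat w"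
      using AB by (auto simp: basis_eq_image_basis_mat)
    then have "?\<pi> A = basis_mat (shear g v)" "?\<pi> B = basis_mat (shear g w)"
      by (simp_all only: \<pi>)
    with vw \<open>A = basis_mat v\<close> \<open>B = basis_mat w\<close> show ?thesis
      using quad_vadd_shear[OF vw]
      by (simp add: red_basis_mat_iff blue_basis_mat_iff length_shear map_fst_shear) blast
  qed
  ultimately show ?thesis
    unfolding swapping_automorphism_def by blast
qed

end

lemma nonorthogonal_differences_id: "nonorthogonal_differences 1 id"
  by (auto simp: nonorthogonal_differences_def bxor_def length_Suc_conv)

fun twist2 :: "bool list \<Rightarrow> bool list" where
  "twist2 [a, b] = [a \<noteq> b, b]"
| "twist2 x = x"

lemma nonorthogonal_differences_twist2: "nonorthogonal_differences 2 twist2"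
  by (auto simp: nonorthogonal_differences_def bxor_def length_Suc_conv numeral_2_eq_2)

text \<open>No linear map works for \<open>m = 3\<close>: every quadratic form on \<open>\<bbbF>\<^sub>2\<^sup>3\<close> has a nonzero
  isotropic vector.\<close>

fun twist3 :: "bool list \<Rightarrow> bool list" where
  "twist3 [a, b, c] = [(a \<noteq> b) \<noteq> (c \<and> \<not> b), (b \<noteq> c) \<noteq> (a \<and> c), (a \<and> b) \<noteq> c]"
| "twist3 x = x"

lemma nonorthogonal_differences_twist3: "nonorthogonal_differences 3 twist3"
proof -
  have three: "length x = 3 \<longleftrightarrow> (\<exists>a b c. x = [a, b, c])" for x :: "bool list"
    by (auto simp: length_Suc_conv numeral_3_eq_3)
  show ?thesis
    unfolding nonorthogonal_differences_def three
  proof (intro conjI allI impI)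
    fix x y :: "bool list"
    assume "\<exists>a b c. x = [a, b, c]" "\<exists>a b c. y = [a, b, c]" "x \<noteq> y"
    then obtain a b c a' b' c' where "x = [a, b, c]" "y = [a', b', c']" "x \<noteq> y"
      by blast
    then show "bdot (bxor x y) (bxor (twist3 x) (twist3 y))"
      by (cases a; cases b; cases c; cases a'; cases b'; cases c') (simp_all add: bxor_def)
  qed auto
qed

lemma swapping_automorphism_exists: "1 \<le> m \<Longrightarrow> m \<le> 3 \<Longrightarrow> \<exists>\<pi>. swapping_automorphism m \<pi>"
  using swapping_automorphism_shear[OF nonorthogonal_differences_id]
    swapping_automorphism_shear[OF nonorthogonal_differences_twist2]
    swapping_automorphism_shear[OF nonorthogonal_differences_twist3]
  by (fastforce simp: le_Suc_eq numeral_3_eq_3 numeral_2_eq_2)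

lemma swapping_automorphism_exists_iff:
  assumes "1 \<le> m"
  shows "(\<exists>\<pi>. swapping_automorphism m \<pi>) \<longleftrightarrow> m \<le> 3"
proof (cases "m \<le> 3")
  case True
  then show ?thesis
    using swapping_automorphism_exists[OF assms] by simp
next
  case False
  then show ?thesis
    using no_swapping_automorphism[of m] by simp
qed

lemma swapping_automorphism_dimensions:
  "{m'::nat. m' \<ge> 1 \<and> (\<exists>\<pi>. swapping_automorphism m' \<pi>)} = {1, 2, 3}"
proof -
  have "{m'::nat. m' \<ge> 1 \<and> (\<exists>\<pi>. swapping_automorphism m' \<pi>)} = {m'. 1 \<le> m' \<and> m' \<le> 3}"
    by (rule Collect_cong, rule conj_cong, rule refl, rule swapping_automorphism_exists_iff)
  also have "\<dots> = {1, 2, 3}"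
    by auto
  finally show ?thesis .
qed

theorem theorem3:
  fixes m :: nat
  assumes "m \<ge> 4"
  shows "(\<exists>S. transversal m S \<and>
            \<not> (\<exists>S'. transversal m S' \<and>
                 ec_isomorphic (induced m S') (colour_complement (induced m S))))
       \<and> \<not> (\<exists>\<pi>. bij_betw \<pi> (basis m) (basis m) \<and>
              (\<forall>A\<in>basis m. \<forall>B\<in>basis m.
                  (blue m A B \<longrightarrow> red m (\<pi> A) (\<pi> B)) \<and>
                  (red m A B \<longrightarrow> blue m (\<pi> A) (\<pi> B))))
       \<and> \<not> (\<exists>P. (\<forall>p\<in>P. \<exists>S S'. p = {S, S'} \<and> S \<noteq> S' \<and>
                   ec_isomorphic (induced m S) (colour_complement (induced m S')) \<and>
                   ec_isomorphic (induced m S') (colour_complement (induced m S)))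
              \<and> (\<forall>p\<in>P. \<forall>q\<in>P. p \<noteq> q \<longrightarrow> p \<inter> q = {})
              \<and> \<Union>P = {S. transversal m S \<and>
                         \<not> ec_isomorphic (induced m S) (colour_complement (induced m S))})
       \<and> {m'::nat. m' \<ge> 1 \<and> (\<exists>\<pi>. swapping_automorphism m' \<pi>)} = {1, 2, 3}"
  using transversal_without_complement[OF assms] no_colour_reversing_permutation[OF assms]
    no_complementary_pairing[OF assms] swapping_automorphism_dimensions
  by (intro conjI) assumption+

end
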